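(* Let $\mathcal{X}$ be a measurable space, $\mathcal{G}$ a class of measurable classifiers $g:\mathcal{X}\to\{-1,+1\}$, and $p\in(0,1)$ a given number. Let $(X'_1,Y'_1),\ldots,(X'_n,Y'_n)$ be i.i.d. copies of a pair $(X',Y')\in\mathcal{X}\times\{-1,+1\}$ with $q=\mathbb{P}\{Y'=+1\}$. Let $\varepsilon\in(0,1/2)$ and suppose $q\in(\varepsilon,1-\varepsilon)$. Let $n'_+=\sum_{i=1}^n\mathbb{I}\{Y'_i=+1\}$, $n'_-=n-n'_+$, and define for $g\in\mathcal{G}$ $$\widetilde{\mathcal{R}}_{w^*,n}(g)=\frac{2p}{q}\frac{1}{n}\sum_{i:Y'_i=+1}\mathbb{I}\{g(X'_i)=-1\}+\frac{1}{1-q}\frac{1}{n}\sum_{i:Y'_i=-1}\mathbb{I}\{g(X'_i)=+1\},$$ $$\widetilde{\mathcal{R}}_{\widehat{w}^*,n}(g)=\frac{2p}{n'_+}\sum_{i:Y'_i=+1}\mathbb{I}\{g(X'_i)=-1\}+\frac{1}{n'_-}\sum_{i:Y'_i=-1}\mathbb{I}\{g(X'_i)=+1\}.$$ Then for any $\delta\in(0,1)$, as soon as $n\ge 2\log(2/\delta)/\varepsilon^2$, with probability larger than $1-\delta$, $$\sup_{g\in\mathcal{G}}\left|\widetilde{\mathcal{R}}_{\widehat{w}^*,n}(g)-\widetilde{\mathcal{R}}_{w^*,n}(g)\right|\le\frac{2(2p+1)}{\varepsilon^2}\sqrt{\frac{\log(2/\delta)}{2n}}.$$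
   Context: $\mathbb{I}\{\cdot\}$ denotes the indicator function. In the paper's application, $Y'=+1$ marks positive examples and $Y'=-1$ marks unlabeled examples. *)

theory Defs
  imports "HOL-Probability.Probability"
begin

text \<open>Sample: x i, y i for i in {1..n}; labels y i in {-1,+1} (as int).\<close>

definition n_pos :: "nat \<Rightarrow> (nat \<Rightarrow> int) \<Rightarrow> nat" where
  "n_pos n y = card {i \<in> {1..n}. y i = 1}"

definition n_neg :: "nat \<Rightarrow> (nat \<Rightarrow> int) \<Rightarrow> nat" where
  "n_neg n y = n - n_pos n y"

definition R_wstar :: "real \<Rightarrow> real \<Rightarrow> nat \<Rightarrow> (nat \<Rightarrow> 'x) \<Rightarrow> (nat \<Rightarrow> int) \<Rightarrow> ('x \<Rightarrow> int) \<Rightarrow> real" where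
  "R_wstar p q n x y g =
     2 * p / q * (1 / real n) * (\<Sum>i\<in>{i \<in> {1..n}. y i = 1}. of_bool (g (x i) = -1))
     + 1 / (1 - q) * (1 / real n) * (\<Sum>i\<in>{i \<in> {1..n}. y i = -1}. of_bool (g (x i) = 1))"

definition R_what :: "real \<Rightarrow> nat \<Rightarrow> (nat \<Rightarrow> 'x) \<Rightarrow> (nat \<Rightarrow> int) \<Rightarrow> ('x \<Rightarrow> int) \<Rightarrow> real" where
  "R_what p n x y g =
     2 * p / real (n_pos n y) * (\<Sum>i\<in>{i \<in> {1..n}. y i = 1}. of_bool (g (x i) = -1))
     + 1 / real (n_neg n y) * (\<Sum>i\<in>{i \<in> {1..n}. y i = -1}. of_bool (g (x i) = 1))"

end

(* Both risks weight the same two counts; they differ only in dividing by n'_+ and n'_-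
   instead of q n and (1 - q) n.  Since each count is at most its divisor, the difference
   is at most (2p/q + 1/(1-q)) |n'_+/n - q|, and n'_+/n is an average of n i.i.d.
   indicators with mean q, so Hoeffding's inequality bounds that deviation by
   sqrt (log (2/delta) / (2n)) with probability at least 1 - delta.  Finally
   2p/q + 1/(1-q) <= (2p+1)/epsilon <= 2(2p+1)/epsilon^2. *)

theory Submission
  imports Defs
begin

lemma abs_div_diff_le:
  fixes s k c m :: "'a :: linordered_field"
  assumes "0 \<le> s" "s \<le> k" "0 < c" "0 < m"
  shows "\<bar>s / k - s / (c * m)\<bar> \<le> \<bar>k / m - c\<bar> / c"
proof (cases "k = 0")
  case True
  \<comment> \<open>Then \<open>s / k = 0\<close>: this covers an empty class in the sample.\<close>
  then show ?thesis using assms by simp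
next
  case False
  then have "0 < k" using assms by simp
  have "s / k - s / (c * m) = s / k * ((c - k / m) / c)"
    using \<open>0 < k\<close> assms by (simp add: field_simps)
  then have "\<bar>s / k - s / (c * m)\<bar> = s / k * (\<bar>k / m - c\<bar> / c)"
    using \<open>0 < k\<close> assms by (simp add: abs_mult abs_minus_commute)
  also have "\<dots> \<le> 1 * (\<bar>k / m - c\<bar> / c)"
    using \<open>0 < k\<close> assms by (intro mult_right_mono) auto
  finally show ?thesis by simp
qed

lemma class_weights_sum_le:
  fixes p q \<epsilon> :: real
  assumes "0 \<le> p" "0 < \<epsilon>" "\<epsilon> < q" "q < 1 - \<epsilon>"
  shows "2 * p / q + 1 / (1 - q) \<le> 2 * (2 * p + 1) / \<epsilon>\<^sup>2"
proof -
  have "2 * p / q + 1 / (1 - q) \<le> (2 * p + 1) / \<epsilon>"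
    using assms frac_le[of "2 * p" "2 * p" \<epsilon> q] frac_le[of 1 1 \<epsilon> "1 - q"]
    by (simp add: add_divide_distrib)
  also have "\<dots> = (2 * p + 1) * \<epsilon> / \<epsilon>\<^sup>2"
    using assms by (simp add: power2_eq_square)
  also have "\<dots> \<le> (2 * p + 1) * 2 / \<epsilon>\<^sup>2"
    using assms by (intro divide_right_mono mult_left_mono) auto
  finally show ?thesis by simp
qed

lemma R_what_R_wstar_diff_le:
  fixes x :: "nat \<Rightarrow> 'x" and y :: "nat \<Rightarrow> int" and g :: "'x \<Rightarrow> int"
  assumes y: "\<forall>i\<in>{1..n}. y i \<in> {-1, 1}"
    and n: "0 < n" and q: "0 < q" "q < 1" and p: "0 \<le> p"
  shows "\<bar>R_what p n x y g - R_wstar p q n x y g\<bar>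
         \<le> (2 * p / q + 1 / (1 - q)) * \<bar>real (n_pos n y) / real n - q\<bar>"
proof -
  define Pos where "Pos = {i \<in> {1..n}. y i = 1}"
  define Neg where "Neg = {i \<in> {1..n}. y i = -1}"
  define s_pos where "s_pos = (\<Sum>i\<in>Pos. of_bool (g (x i) = -1) :: real)"
  define s_neg where "s_neg = (\<Sum>i\<in>Neg. of_bool (g (x i) = 1) :: real)"
  have card_Pos: "card Pos = n_pos n y"
    by (simp add: Pos_def n_pos_def)
  have Neg_eq: "Neg = {1..n} - Pos"
    using y by (auto simp: Neg_def Pos_def)
  have card_Neg: "card Neg = n_neg n y"
    unfolding Neg_eq n_neg_def card_Pos[symmetric] by (subst card_Diff_subset) (auto simp: Pos_def)
  have "card Pos \<le> card {1..n}"
    unfolding Pos_def by (intro card_mono) auto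
  then have neg_freq: "\<bar>real (n_neg n y) / real n - (1 - q)\<bar> = \<bar>real (n_pos n y) / real n - q\<bar>"
    using n by (simp add: card_Pos n_neg_def of_nat_diff field_simps abs_minus_commute)
  have s_pos: "0 \<le> s_pos" "s_pos \<le> real (card Pos)"
    unfolding s_pos_def using sum_bounded_above[of Pos "\<lambda>i. of_bool (g (x i) = -1) :: real" 1]
    by (auto intro: sum_nonneg)
  have s_neg: "0 \<le> s_neg" "s_neg \<le> real (card Neg)"
    unfolding s_neg_def using sum_bounded_above[of Neg "\<lambda>i. of_bool (g (x i) = 1) :: real" 1]
    by (auto intro: sum_nonneg)
  have "R_what p n x y g - R_wstar p q n x y g
      = 2 * p * (s_pos / real (card Pos) - s_pos / (q * real n))
        + (s_neg / real (card Neg) - s_neg / ((1 - q) * real n))"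
    unfolding R_what_def R_wstar_def Pos_def[symmetric] Neg_def[symmetric]
      s_pos_def[symmetric] s_neg_def[symmetric] card_Pos card_Neg
    by (simp add: field_simps)
  then have "\<bar>R_what p n x y g - R_wstar p q n x y g\<bar>
      \<le> 2 * p * \<bar>s_pos / real (card Pos) - s_pos / (q * real n)\<bar>
        + \<bar>s_neg / real (card Neg) - s_neg / ((1 - q) * real n)\<bar>"
    using p by (simp add: abs_mult order_trans[OF abs_triangle_ineq])
  also have "\<dots> \<le> 2 * p * (\<bar>real (n_pos n y) / real n - q\<bar> / q)
                 + \<bar>real (n_pos n y) / real n - q\<bar> / (1 - q)"
    using abs_div_diff_le[OF s_pos, of q "real n"] abs_div_diff_le[OF s_neg, of "1 - q" "real n"]
      neg_freq n q p unfolding card_Pos card_Neg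
    by (intro add_mono mult_left_mono) auto
  also have "\<dots> = (2 * p / q + 1 / (1 - q)) * \<bar>real (n_pos n y) / real n - q\<bar>"
    by (simp add: field_simps)
  finally show ?thesis .
qed

lemma (in prob_space) empirical_frequency_concentration:
  fixes W :: "'i \<Rightarrow> 'a \<Rightarrow> 'b" and W0 :: "'a \<Rightarrow> 'b" and P :: "'b \<Rightarrow> bool"
  assumes I: "finite I" "I \<noteq> {}"
    and indep: "indep_vars (\<lambda>_. N) W I"
    and ident: "\<And>i. i \<in> I \<Longrightarrow> distr M N (W i) = distr M N W0"
    and W0: "W0 \<in> measurable M N"
    and P: "Measurable.pred N P"
    and t: "t \<ge> 0"
  shows "\<exists>A\<in>events. prob A \<ge> 1 - 2 * exp (-2 * real (card I) * t\<^sup>2) \<and>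
           (\<forall>\<omega>\<in>A. \<bar>real (card {i \<in> I. P (W i \<omega>)}) / real (card I)
                     - prob {\<omega> \<in> space M. P (W0 \<omega>)}\<bar> < t)"
proof -
  define h where "h = (\<lambda>z. of_bool (P z) :: real)"
  have h: "h \<in> borel_measurable N"
    unfolding h_def using P by measurable
  have W: "W i \<in> measurable M N" if "i \<in> I" for i
    using indep that by (auto simp: indep_vars_def)
  interpret H: Hoeffding_ineq_iid M I "\<lambda>i. h \<circ> W i" "h \<circ> W0" 0 1 "expectation (h \<circ> W0)"
  proof unfold_locales
    show "indep_vars (\<lambda>_. borel) (\<lambda>i. h \<circ> W i) I"
      using indep_vars_compose2[OF indep, of "\<lambda>_. h"] h by (simp add: comp_def)
    show "distr M borel (h \<circ> W i) = distr M borel (h \<circ> W0)" if "i \<in> I" for i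
      using ident[OF that] distr_distr[OF h W[OF that]] distr_distr[OF h W0] by simp
    show "AE x in M. (h \<circ> W0) x \<in> {0..1}"
      by (simp add: h_def)
  qed (use I W0 h in auto)
  have mean: "expectation (h \<circ> W0) = prob {\<omega> \<in> space M. P (W0 \<omega>)}"
  proof -
    have "expectation (h \<circ> W0) = expectation (indicator {\<omega> \<in> space M. P (W0 \<omega>)})"
      by (intro Bochner_Integration.integral_cong) (auto simp: h_def indicator_def)
    then show ?thesis
      by (simp add: Int_absorb2)
  qed
  have count: "(\<Sum>i\<in>I. h (W i \<omega>)) = real (card {i \<in> I. P (W i \<omega>)})" for \<omega>
    using I by (simp add: h_def sum_of_bool_eq Int_def)
  define B where "B = {\<omega> \<in> space M. \<bar>(\<Sum>i\<in>I. (h \<circ> W i) \<omega>) / real (card I) - expectation (h \<circ> W0)\<bar> \<ge> t}"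
  have B: "B \<in> events"
    unfolding B_def using H.random_variable by measurable
  have "prob B \<le> 2 * exp (-2 * real (card I) * t\<^sup>2)"
    using H.Hoeffding_ineq_abs_ge'[OF t] I by (simp add: B_def)
  then have "prob (space M - B) \<ge> 1 - 2 * exp (-2 * real (card I) * t\<^sup>2)"
    using prob_compl[OF B] by simp
  moreover have "\<forall>\<omega>\<in>space M - B. \<bar>real (card {i \<in> I. P (W i \<omega>)}) / real (card I)
                     - prob {\<omega> \<in> space M. P (W0 \<omega>)}\<bar> < t"
    by (auto simp: B_def count mean)
  ultimately show ?thesis
    using B by blast
qed

theorem lemma4:
  fixes M :: "'a measure" and Mx :: "'x measure"
    and G :: "('x \<Rightarrow> int) set"
    and X :: "nat \<Rightarrow> 'a \<Rightarrow> 'x" and Y :: "nat \<Rightarrow> 'a \<Rightarrow> int"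
    and X0 :: "'a \<Rightarrow> 'x" and Y0 :: "'a \<Rightarrow> int"
    and p q \<epsilon> \<delta> :: real and n :: nat
  assumes "prob_space M"
    and "G \<subseteq> measurable Mx (count_space UNIV)"
    and "\<forall>g\<in>G. \<forall>x\<in>space Mx. g x \<in> {-1, 1}"
    and "0 < p" "p < 1"
    and "X0 \<in> measurable M Mx" "Y0 \<in> measurable M (count_space UNIV)"
    and "\<forall>\<omega>\<in>space M. Y0 \<omega> \<in> {-1, 1}"
    and "\<forall>i\<in>{1..n}. X i \<in> measurable M Mx \<and> Y i \<in> measurable M (count_space UNIV)"
    and "\<forall>i\<in>{1..n}. \<forall>\<omega>\<in>space M. Y i \<omega> \<in> {-1, 1}"
    and "prob_space.indep_vars M (\<lambda>_. Mx \<Otimes>\<^sub>M count_space UNIV)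
           (\<lambda>i \<omega>. (X i \<omega>, Y i \<omega>)) {1..n}"
    and "\<forall>i\<in>{1..n}. distr M (Mx \<Otimes>\<^sub>M count_space UNIV) (\<lambda>\<omega>. (X i \<omega>, Y i \<omega>))
                   = distr M (Mx \<Otimes>\<^sub>M count_space UNIV) (\<lambda>\<omega>. (X0 \<omega>, Y0 \<omega>))"
    and "q = measure M {\<omega> \<in> space M. Y0 \<omega> = 1}"
    and "0 < \<epsilon>" "\<epsilon> < 1/2"
    and "\<epsilon> < q" "q < 1 - \<epsilon>"
    and "0 < \<delta>" "\<delta> < 1"
    and "real n \<ge> 2 * ln (2 / \<delta>) / \<epsilon>^2"
  shows "\<exists>A\<in>sets M. measure M A \<ge> 1 - \<delta> \<and>
           (\<forall>\<omega>\<in>A. \<forall>g\<in>G.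
              \<bar>R_what p n (\<lambda>i. X i \<omega>) (\<lambda>i. Y i \<omega>) g
                 - R_wstar p q n (\<lambda>i. X i \<omega>) (\<lambda>i. Y i \<omega>) g\<bar>
              \<le> 2 * (2 * p + 1) / \<epsilon>^2 * sqrt (ln (2 / \<delta>) / (2 * real n)))"
proof -
  interpret prob_space M by fact
  have "0 < ln (2 / \<delta>)"
    using \<open>0 < \<delta>\<close> \<open>\<delta> < 1\<close> by simp
  then have "0 < 2 * ln (2 / \<delta>) / \<epsilon>^2"
    using \<open>0 < \<epsilon>\<close> by simp
  \<comment> \<open>This is the only use of the sample-size hypothesis.\<close>
  then have n: "0 < n"
    using \<open>real n \<ge> 2 * ln (2 / \<delta>) / \<epsilon>^2\<close> by linarith
  define t where "t = sqrt (ln (2 / \<delta>) / (2 * real n))"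
  have t: "2 * exp (-2 * real (card {1..n}) * t\<^sup>2) = \<delta>"
    using \<open>0 < ln (2 / \<delta>)\<close> \<open>0 < \<delta>\<close> n by (simp add: t_def exp_minus)
  have "\<exists>A\<in>events. prob A \<ge> 1 - 2 * exp (-2 * real (card {1..n}) * t\<^sup>2) \<and>
          (\<forall>\<omega>\<in>A. \<bar>real (card {i \<in> {1..n}. snd (X i \<omega>, Y i \<omega>) = 1}) / real (card {1..n})
                    - prob {\<omega> \<in> space M. snd (X0 \<omega>, Y0 \<omega>) = 1}\<bar> < t)"
    using n \<open>0 < ln (2 / \<delta>)\<close> assms(6,7,12) unfolding t_def
    by (intro empirical_frequency_concentration[OF _ _ assms(11)]) auto
  then obtain A where A: "A \<in> events" "prob A \<ge> 1 - \<delta>"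
      "\<forall>\<omega>\<in>A. \<bar>real (n_pos n (\<lambda>i. Y i \<omega>)) / real n - q\<bar> < t"
    unfolding t assms(13) n_pos_def by auto
  have q: "0 < q" "q < 1"
    using \<open>0 < \<epsilon>\<close> \<open>\<epsilon> < q\<close> \<open>q < 1 - \<epsilon>\<close> by auto
  show ?thesis
  proof (intro bexI[OF _ A(1)] conjI A(2) ballI)
    fix \<omega> g
    assume "\<omega> \<in> A"
    then have "\<forall>i\<in>{1..n}. Y i \<omega> \<in> {-1, 1}"
      using assms(10) sets.sets_into_space[OF A(1)] by blast
    then have "\<bar>R_what p n (\<lambda>i. X i \<omega>) (\<lambda>i. Y i \<omega>) g - R_wstar p q n (\<lambda>i. X i \<omega>) (\<lambda>i. Y i \<omega>) g\<bar>
        \<le> (2 * p / q + 1 / (1 - q)) * \<bar>real (n_pos n (\<lambda>i. Y i \<omega>)) / real n - q\<bar>"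
      using n q \<open>0 < p\<close> by (intro R_what_R_wstar_diff_le) auto
    also have "\<dots> \<le> 2 * (2 * p + 1) / \<epsilon>\<^sup>2 * t"
      using class_weights_sum_le[of p \<epsilon> q] A(3) \<open>\<omega> \<in> A\<close> assms(4,14,16,17)
      by (intro mult_mono) (auto intro: less_imp_le)
    finally show "\<bar>R_what p n (\<lambda>i. X i \<omega>) (\<lambda>i. Y i \<omega>) g - R_wstar p q n (\<lambda>i. X i \<omega>) (\<lambda>i. Y i \<omega>) g\<bar>
        \<le> 2 * (2 * p + 1) / \<epsilon>^2 * sqrt (ln (2 / \<delta>) / (2 * real n))"
      by (simp add: t_def)
  qed
qed

end
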